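(* Let $\phi\colon F\to G$ of type $|\alpha|\xrightarrow{\sigma}n\xleftarrow{\tau}|\beta|$ and $\psi\colon G\to H$ of type $|\beta|\xrightarrow{\eta}m\xleftarrow{\theta}|\gamma|$ be transformations, with $F\colon\mathbb B^\alpha\to\mathbb C$, $G\colon\mathbb B^\beta\to\mathbb C$, $H\colon\mathbb B^\gamma\to\mathbb C$, and let $\zeta\colon n\to l$, $\xi\colon m\to l$ be the pushout of $\tau$ and $\eta$ in finite sets, so that $\psi\circ\phi$ has type $|\alpha|\xrightarrow{\zeta\sigma}l\xleftarrow{\xi\theta}|\gamma|$. Let $i\in l$. If $\phi$ is dinatural in its $x$-th variable for every $x\in\zeta^{-1}\{i\}$, $\psi$ is dinatural in its $y$-th variable for every $y\in\xi^{-1}\{i\}$, and the $i$-th connected component of $\Gamma(\psi)\circ\Gamma(\phi)$ is acyclic, then $\psi\circ\phi$ is dinatural in its $i$-th variable.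
   Context: Notation: for $k\in\mathbb N$, $k$ also denotes $\{1,\dots,k\}$. For $\alpha\in\{+,-\}^*$, $\mathbb B^\alpha=\mathbb B^{\alpha_1}\times\cdots\times\mathbb B^{\alpha_{|\alpha|}}$ with $\mathbb B^+=\mathbb B$, $\mathbb B^-=\mathbb B^{op}$. For $\mathbf A=(A_1,\dots,A_n)$ and $\sigma\colon k\to n$, $\mathbf A\sigma=(A_{\sigma1},\dots,A_{\sigma k})$. A morphism $f\colon A\to B$ placed in a contravariant argument is regarded as a morphism $B\to A$ of $\mathbb B^{op}$. A transformation $\phi\colon F\to G$ of type $|\alpha|\xrightarrow{\sigma}n\xleftarrow{\tau}|\beta|$ ($\sigma,\tau$ arbitrary functions) is a family $\phi_{\mathbf A}\colon F(\mathbf A\sigma)\to G(\mathbf A\tau)$, $\mathbf A\in\mathrm{Ob}(\mathbb B)^n$; $A_i$ is its $i$-th variable. $\mathbf A[X,Y/i]\sigma$ is the tuple whose $j$-th entry is $X$ if $\sigma j=i,\alpha_j=-$, $Y$ if $\sigma j=i,\alpha_j=+$, and $A_{\sigma j}$ (or $1_{A_{\sigma j}}$ when $X,Y$ are morphisms) otherwise; $\mathbf A[X/i]=\mathbf A[X,X/i]$. $\phi$ is dinatural in its $i$-th variable if for all objects $A_j$ ($j\neq i$) and all $f\colon A\to B$: $G(\mathbf A[A,f/i]\tau)\circ\phi_{\mathbf A[A/i]}\circ F(\mathbf A[f,A/i]\sigma)=G(\mathbf A[f,B/i]\tau)\circ\phi_{\mathbf A[B/i]}\circ F(\mathbf A[B,f/i]\sigma)$.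 Vertical composite: $(\psi\circ\phi)_{\mathbf A}=\psi_{\mathbf A\xi}\circ\phi_{\mathbf A\zeta}$ for $\mathbf A\in\mathrm{Ob}(\mathbb B)^l$. Composite graph $\Gamma(\psi)\circ\Gamma(\phi)$: directed bipartite graph with places the disjoint union of $|\alpha|,|\beta|,|\gamma|$ and transitions $n\sqcup m$. For $t\in n$: arc from place $j$ of the $\alpha$-block to $t$ iff $\sigma j=t,\alpha_j=+$; from $t$ to it iff $\sigma j=t,\alpha_j=-$; arc from place $j$ of the $\beta$-block to $t$ iff $\tau j=t,\beta_j=-$; from $t$ to it iff $\tau j=t,\beta_j=+$. For $t\in m$: arc from place $j$ of the $\beta$-block to $t$ iff $\eta j=t,\beta_j=+$; from $t$ to it iff $\eta j=t,\beta_j=-$; arc from place $j$ of the $\gamma$-block to $t$ iff $\theta j=t,\gamma_j=-$; from $t$ to it iff $\theta j=t,\gamma_j=+$. Its connected components correspond bijectively to $l$: the $i$-th component is the one containing the transitions $t\in n$ with $\zeta t=i$ and $t\in m$ with $\xi t=i$. Acyclic means without directed cycles. *)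

theory Defs
  imports Main
begin

record ('o, 'm) cat =
  Obj :: "'o set"
  Arr :: "'o \<Rightarrow> 'o \<Rightarrow> 'm set"
  cmp :: "'m \<Rightarrow> 'm \<Rightarrow> 'm"   (* cmp g f = g \<circ> f *)
  idm :: "'o \<Rightarrow> 'm"

definition is_category :: "('o, 'm, 'z) cat_scheme \<Rightarrow> bool" where
  "is_category C \<longleftrightarrow>
     (\<forall>A B f. f \<in> Arr C A B \<longrightarrow> A \<in> Obj C \<and> B \<in> Obj C) \<and>
     (\<forall>A \<in> Obj C. idm C A \<in> Arr C A A) \<and>
     (\<forall>A B D f g. f \<in> Arr C A B \<longrightarrow> g \<in> Arr C B D \<longrightarrow> cmp C g f \<in> Arr C A D) \<and>
     (\<forall>A B D E f g h. f \<in> Arr C A B \<longrightarrow> g \<in> Arr C B D \<longrightarrow> h \<in> Arr C D E \<longrightarrow>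
         cmp C h (cmp C g f) = cmp C (cmp C h g) f) \<and>
     (\<forall>A B f. f \<in> Arr C A B \<longrightarrow> cmp C f (idm C A) = f \<and> cmp C (idm C B) f = f)"

text \<open>The product category B^alpha; a sign list alpha uses True for + and False for -.
  Objects are lists of objects of length |alpha|; a morphism component at a
  contravariant position j goes in the opposite direction in B.\<close>

definition power_cat :: "('o, 'm, 'z) cat_scheme \<Rightarrow> bool list \<Rightarrow> ('o list, 'm list) cat" where
  "power_cat B \<alpha> =
     \<lparr> Obj = {As. length As = length \<alpha> \<and> set As \<subseteq> Obj B},
       Arr = (\<lambda>As Bs. {fs. length As = length \<alpha> \<and> set As \<subseteq> Obj B \<and>
                           length Bs = length \<alpha> \<and> set Bs \<subseteq> Obj B \<and>
                           length fs = length \<alpha> \<and>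
                           (\<forall>j < length \<alpha>. fs ! j \<in>
                              (if \<alpha> ! j then Arr B (As ! j) (Bs ! j) else Arr B (Bs ! j) (As ! j)))}),
       cmp = (\<lambda>gs fs. map (\<lambda>j. if \<alpha> ! j then cmp B (gs ! j) (fs ! j) else cmp B (fs ! j) (gs ! j))
                          [0..<length \<alpha>]),
       idm = (\<lambda>As. map (idm B) As) \<rparr>"

definition is_functor ::
  "('o, 'm, 'z) cat_scheme \<Rightarrow> ('p, 'q, 'w) cat_scheme \<Rightarrow> ('o \<Rightarrow> 'p) \<Rightarrow> ('m \<Rightarrow> 'q) \<Rightarrow> bool" where
  "is_functor D C Fo Fm \<longleftrightarrow>
     (\<forall>A \<in> Obj D. Fo A \<in> Obj C) \<and>
     (\<forall>A B f. f \<in> Arr D A B \<longrightarrow> Fm f \<in> Arr C (Fo A) (Fo B)) \<and>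
     (\<forall>A \<in> Obj D. Fm (idm D A) = idm C (Fo A)) \<and>
     (\<forall>A B E f g. f \<in> Arr D A B \<longrightarrow> g \<in> Arr D B E \<longrightarrow> Fm (cmp D g f) = cmp C (Fm g) (Fm f))"

section \<open>Tuples, reindexing and substitution (indices are 0-based: k = {0..<k})\<close>

definition reidx :: "'a list \<Rightarrow> (nat \<Rightarrow> nat) \<Rightarrow> nat \<Rightarrow> 'a list" where
  "reidx As \<sigma> k = map (\<lambda>j. As ! (\<sigma> j)) [0..<k]"

definition subst_obj :: "'o list \<Rightarrow> 'o \<Rightarrow> 'o \<Rightarrow> nat \<Rightarrow> (nat \<Rightarrow> nat) \<Rightarrow> bool list \<Rightarrow> 'o list" where
  "subst_obj As X Y i \<sigma> \<alpha> =
     map (\<lambda>j. if \<sigma> j = i then (if \<alpha> ! j then Y else X) else As ! (\<sigma> j)) [0..<length \<alpha>]"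

text \<open>Morphisms: A[f,g/i]sigma, identities elsewhere (an object X in a morphism
  substitution stands for its identity).\<close>
definition subst_mor ::
  "('o, 'm, 'z) cat_scheme \<Rightarrow> 'o list \<Rightarrow> 'm \<Rightarrow> 'm \<Rightarrow> nat \<Rightarrow> (nat \<Rightarrow> nat) \<Rightarrow> bool list \<Rightarrow> 'm list" where
  "subst_mor B As f g i \<sigma> \<alpha> =
     map (\<lambda>j. if \<sigma> j = i then (if \<alpha> ! j then g else f) else idm B (As ! (\<sigma> j))) [0..<length \<alpha>]"

definition maps_into :: "(nat \<Rightarrow> nat) \<Rightarrow> nat \<Rightarrow> nat \<Rightarrow> bool" where
  "maps_into f a b \<longleftrightarrow> (\<forall>x < a. f x < b)"

definition is_transformation ::
  "('o, 'm, 'z) cat_scheme \<Rightarrow> ('p, 'q, 'w) cat_scheme \<Rightarrow> bool list \<Rightarrow> bool list \<Rightarrow> nat \<Rightarrow>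
   (nat \<Rightarrow> nat) \<Rightarrow> (nat \<Rightarrow> nat) \<Rightarrow> ('o list \<Rightarrow> 'p) \<Rightarrow> ('o list \<Rightarrow> 'p) \<Rightarrow> ('o list \<Rightarrow> 'q) \<Rightarrow> bool" where
  "is_transformation B C \<alpha> \<beta> n \<sigma> \<tau> Fo Go \<phi> \<longleftrightarrow>
     maps_into \<sigma> (length \<alpha>) n \<and> maps_into \<tau> (length \<beta>) n \<and>
     (\<forall>As. length As = n \<and> set As \<subseteq> Obj B \<longrightarrow>
        \<phi> As \<in> Arr C (Fo (reidx As \<sigma> (length \<alpha>))) (Go (reidx As \<tau> (length \<beta>))))"

definition dinatural_in ::
  "('o, 'm, 'z) cat_scheme \<Rightarrow> ('p, 'q, 'w) cat_scheme \<Rightarrow> bool list \<Rightarrow> bool list \<Rightarrow> nat \<Rightarrow>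
   (nat \<Rightarrow> nat) \<Rightarrow> (nat \<Rightarrow> nat) \<Rightarrow> ('m list \<Rightarrow> 'q) \<Rightarrow> ('m list \<Rightarrow> 'q) \<Rightarrow> ('o list \<Rightarrow> 'q) \<Rightarrow> nat \<Rightarrow> bool" where
  "dinatural_in B C \<alpha> \<beta> n \<sigma> \<tau> Fm Gm \<phi> i \<longleftrightarrow>
     (\<forall>As A A' f. length As = n \<and> set As \<subseteq> Obj B \<and> f \<in> Arr B A A' \<longrightarrow>
        cmp C (Gm (subst_mor B As (idm B A) f i \<tau> \<beta>))
              (cmp C (\<phi> (As[i := A])) (Fm (subst_mor B As f (idm B A) i \<sigma> \<alpha>)))
      = cmp C (Gm (subst_mor B As f (idm B A') i \<tau> \<beta>))
              (cmp C (\<phi> (As[i := A'])) (Fm (subst_mor B As (idm B A') f i \<sigma> \<alpha>))))"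

definition vcomp ::
  "('p, 'q, 'w) cat_scheme \<Rightarrow> nat \<Rightarrow> nat \<Rightarrow> (nat \<Rightarrow> nat) \<Rightarrow> (nat \<Rightarrow> nat) \<Rightarrow>
   ('o list \<Rightarrow> 'q) \<Rightarrow> ('o list \<Rightarrow> 'q) \<Rightarrow> 'o list \<Rightarrow> 'q" where
  "vcomp C n m \<zeta> \<xi> \<psi> \<phi> As = cmp C (\<psi> (reidx As \<xi> m)) (\<phi> (reidx As \<zeta> n))"

text \<open>zeta : n -> l, xi : m -> l is a pushout of tau : b -> n and eta : b -> m
  in the category of finite sets (every finite set is in bijection with some k).\<close>
definition is_pushout ::
  "nat \<Rightarrow> nat \<Rightarrow> nat \<Rightarrow> (nat \<Rightarrow> nat) \<Rightarrow> (nat \<Rightarrow> nat) \<Rightarrow> nat \<Rightarrow> (nat \<Rightarrow> nat) \<Rightarrow> (nat \<Rightarrow> nat) \<Rightarrow> bool" where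
  "is_pushout b n m \<tau> \<eta> l \<zeta> \<xi> \<longleftrightarrow>
     maps_into \<tau> b n \<and> maps_into \<eta> b m \<and> maps_into \<zeta> n l \<and> maps_into \<xi> m l \<and>
     (\<forall>j < b. \<zeta> (\<tau> j) = \<xi> (\<eta> j)) \<and>
     (\<forall>k a c. maps_into a n k \<and> maps_into c m k \<and> (\<forall>j < b. a (\<tau> j) = c (\<eta> j)) \<longrightarrow>
        (\<exists>u. maps_into u l k \<and> (\<forall>x < n. u (\<zeta> x) = a x) \<and> (\<forall>y < m. u (\<xi> y) = c y)) \<and>
        (\<forall>u u'. maps_into u l k \<and> (\<forall>x < n. u (\<zeta> x) = a x) \<and> (\<forall>y < m. u (\<xi> y) = c y) \<and>
                maps_into u' l k \<and> (\<forall>x < n. u' (\<zeta> x) = a x) \<and> (\<forall>y < m. u' (\<xi> y) = c y)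
                \<longrightarrow> (\<forall>z < l. u z = u' z)))"

datatype node = PA nat | PB nat | PC nat | TN nat | TM nat

definition comp_graph ::
  "bool list \<Rightarrow> bool list \<Rightarrow> bool list \<Rightarrow> (nat \<Rightarrow> nat) \<Rightarrow> (nat \<Rightarrow> nat) \<Rightarrow> (nat \<Rightarrow> nat) \<Rightarrow> (nat \<Rightarrow> nat)
   \<Rightarrow> (node \<times> node) set" where
  "comp_graph \<alpha> \<beta> \<gamma> \<sigma> \<tau> \<eta> \<theta> =
      {(PA j, TN (\<sigma> j)) | j. j < length \<alpha> \<and> \<alpha> ! j}
    \<union> {(TN (\<sigma> j), PA j) | j. j < length \<alpha> \<and> \<not> \<alpha> ! j}
    \<union> {(PB j, TN (\<tau> j)) | j. j < length \<beta> \<and> \<not> \<beta> ! j}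
    \<union> {(TN (\<tau> j), PB j) | j. j < length \<beta> \<and> \<beta> ! j}
    \<union> {(PB j, TM (\<eta> j)) | j. j < length \<beta> \<and> \<beta> ! j}
    \<union> {(TM (\<eta> j), PB j) | j. j < length \<beta> \<and> \<not> \<beta> ! j}
    \<union> {(PC j, TM (\<theta> j)) | j. j < length \<gamma> \<and> \<not> \<gamma> ! j}
    \<union> {(TM (\<theta> j), PC j) | j. j < length \<gamma> \<and> \<gamma> ! j}"

definition component :: "(node \<times> node) set \<Rightarrow> nat \<Rightarrow> nat \<Rightarrow> (nat \<Rightarrow> nat) \<Rightarrow> (nat \<Rightarrow> nat) \<Rightarrow> nat \<Rightarrow> node set" where
  "component E n m \<zeta> \<xi> i =
     {v. \<exists>t. ((t \<in> TN ` {x. x < n \<and> \<zeta> x = i}) \<or> (t \<in> TM ` {y. y < m \<and> \<xi> y = i})) \<and>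
            (t, v) \<in> (E \<union> E\<inverse>)\<^sup>*}"

end

theory Submission
  imports Defs
begin

(* Fix an instance f : A \<rightarrow> A' of the dinaturality condition in the i-th variable. Between its two
   sides interpolate composites in which every transition of the i-th component of the composite
   graph is either still at A or already moved to A', the places between them carrying f or an
   identity. Moving one transition all of whose successors in the component have already been moved
   is a single instance of the dinaturality of phi or psi in that variable, whiskered by the rest of
   the composite. Since the component is acyclic, its transitions can be moved one by one in such an
   order, which leads from the composite with everything at A (the left side) to the one with
   everything at A' (the right side). *)

lemma cat_arr_objs: "is_category C \<Longrightarrow> f \<in> Arr C X Y \<Longrightarrow> X \<in> Obj C \<and> Y \<in> Obj C"
  unfolding is_category_def by blast

lemma cat_idm_arr: "is_category C \<Longrightarrow> X \<in> Obj C \<Longrightarrow> idm C X \<in> Arr C X X"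
  unfolding is_category_def by blast

lemma cat_cmp_arr: "is_category C \<Longrightarrow> f \<in> Arr C X Y \<Longrightarrow> g \<in> Arr C Y Z \<Longrightarrow> cmp C g f \<in> Arr C X Z"
  unfolding is_category_def by blast

lemma cat_cmp_assoc:
  "is_category C \<Longrightarrow> f \<in> Arr C X Y \<Longrightarrow> g \<in> Arr C Y Z \<Longrightarrow> h \<in> Arr C Z W \<Longrightarrow>
   cmp C h (cmp C g f) = cmp C (cmp C h g) f"
  unfolding is_category_def by blast

lemma cat_idm_left: "is_category C \<Longrightarrow> f \<in> Arr C X Y \<Longrightarrow> cmp C (idm C Y) f = f"
  unfolding is_category_def by blast

lemma cat_idm_right: "is_category C \<Longrightarrow> f \<in> Arr C X Y \<Longrightarrow> cmp C f (idm C X) = f"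
  unfolding is_category_def by blast

lemma cat_cmp_reassoc:
  assumes C: "is_category C"
    and l: "l \<in> Arr C X0 X1" and v: "v \<in> Arr C X1 X2" and p: "p \<in> Arr C X2 X3"
    and u: "u \<in> Arr C X3 X4" and r: "r \<in> Arr C X4 X5"
  shows "cmp C (cmp C r u) (cmp C p (cmp C v l)) = cmp C r (cmp C (cmp C u (cmp C p v)) l)"
proof -
  have vl: "cmp C v l \<in> Arr C X0 X2" using cat_cmp_arr[OF C l v] .
  have pvl: "cmp C p (cmp C v l) \<in> Arr C X0 X3" using cat_cmp_arr[OF C vl p] .
  have pv: "cmp C p v \<in> Arr C X1 X3" using cat_cmp_arr[OF C v p] .
  have "cmp C (cmp C r u) (cmp C p (cmp C v l)) = cmp C r (cmp C u (cmp C p (cmp C v l)))"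
    using cat_cmp_assoc[OF C pvl u r] by simp
  also have "\<dots> = cmp C r (cmp C u (cmp C (cmp C p v) l))"
    using cat_cmp_assoc[OF C l v p] by simp
  also have "\<dots> = cmp C r (cmp C (cmp C u (cmp C p v)) l)"
    using cat_cmp_assoc[OF C l pv u] by simp
  finally show ?thesis .
qed

lemma functor_arr: "is_functor D C Fo Fm \<Longrightarrow> f \<in> Arr D X Y \<Longrightarrow> Fm f \<in> Arr C (Fo X) (Fo Y)"
  unfolding is_functor_def by blast

lemma functor_cmp:
  "is_functor D C Fo Fm \<Longrightarrow> f \<in> Arr D X Y \<Longrightarrow> g \<in> Arr D Y Z \<Longrightarrow> Fm (cmp D g f) = cmp C (Fm g) (Fm f)"
  unfolding is_functor_def by blast

lemma functor_idm: "is_functor D C Fo Fm \<Longrightarrow> X \<in> Obj D \<Longrightarrow> Fm (idm D X) = idm C (Fo X)"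
  unfolding is_functor_def by blast

lemma transformation_arr:
  "is_transformation B C \<alpha> \<beta> n \<sigma> \<tau> Fo Go \<phi> \<Longrightarrow> length Xs = n \<Longrightarrow> set Xs \<subseteq> Obj B \<Longrightarrow>
   \<phi> Xs \<in> Arr C (Fo (reidx Xs \<sigma> (length \<alpha>))) (Go (reidx Xs \<tau> (length \<beta>)))"
  unfolding is_transformation_def by blast

lemma length_reidx [simp]: "length (reidx Xs \<sigma> k) = k"
  by (simp add: reidx_def)

lemma nth_reidx [simp]: "j < k \<Longrightarrow> reidx Xs \<sigma> k ! j = Xs ! \<sigma> j"
  by (simp add: reidx_def)

lemma set_reidx: "maps_into \<sigma> k (length Xs) \<Longrightarrow> set (reidx Xs \<sigma> k) \<subseteq> set Xs"
  by (auto simp: reidx_def maps_into_def)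

lemma length_subst_obj [simp]: "length (subst_obj Xs X Y x \<sigma> \<alpha>) = length \<alpha>"
  by (simp add: subst_obj_def)

lemma nth_subst_obj [simp]:
  "j < length \<alpha> \<Longrightarrow>
   subst_obj Xs X Y x \<sigma> \<alpha> ! j = (if \<sigma> j = x then (if \<alpha> ! j then Y else X) else Xs ! \<sigma> j)"
  by (simp add: subst_obj_def)

lemma set_subst_obj:
  "maps_into \<sigma> (length \<alpha>) (length Xs) \<Longrightarrow> set (subst_obj Xs X Y x \<sigma> \<alpha>) \<subseteq> insert X (insert Y (set Xs))"
  by (auto simp: subst_obj_def maps_into_def)

lemma power_cat_arrI:
  assumes "length Xs = length \<alpha>" "length Ys = length \<alpha>" "set Xs \<subseteq> Obj B" "set Ys \<subseteq> Obj B"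
    and "\<And>j. j < length \<alpha> \<Longrightarrow> g j \<in> (if \<alpha> ! j then Arr B (Xs ! j) (Ys ! j) else Arr B (Ys ! j) (Xs ! j))"
  shows "map g [0..<length \<alpha>] \<in> Arr (power_cat B \<alpha>) Xs Ys"
  using assms by (auto simp: power_cat_def)

lemma power_cat_cmp_map:
  "cmp (power_cat B \<alpha>) (map g [0..<length \<alpha>]) (map h [0..<length \<alpha>])
     = map (\<lambda>j. if \<alpha> ! j then cmp B (g j) (h j) else cmp B (h j) (g j)) [0..<length \<alpha>]"
  by (auto simp: power_cat_def)

lemma power_cat_idm: "idm (power_cat B \<alpha>) Xs = map (idm B) Xs"
  by (simp add: power_cat_def)

lemma reidx_list_update:
  "maps_into \<sigma> (length \<alpha>) (length Xs) \<Longrightarrow> reidx (Xs[x := X]) \<sigma> (length \<alpha>) = subst_obj Xs X X x \<sigma> \<alpha>"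
  by (auto simp: reidx_def subst_obj_def maps_into_def nth_list_update)

lemma subst_mor_arr:
  assumes B: "is_category B" and Xs: "set Xs \<subseteq> Obj B" "maps_into \<sigma> (length \<alpha>) (length Xs)"
    and g: "g \<in> Arr B X' X" and h: "h \<in> Arr B Y Y'"
  shows "subst_mor B Xs g h x \<sigma> \<alpha> \<in> Arr (power_cat B \<alpha>) (subst_obj Xs X Y x \<sigma> \<alpha>) (subst_obj Xs X' Y' x \<sigma> \<alpha>)"
  unfolding subst_mor_def
proof (rule power_cat_arrI)
  show "set (subst_obj Xs X Y x \<sigma> \<alpha>) \<subseteq> Obj B" "set (subst_obj Xs X' Y' x \<sigma> \<alpha>) \<subseteq> Obj B"
    using set_subst_obj[OF Xs(2)] Xs(1) cat_arr_objs[OF B g] cat_arr_objs[OF B h] by blast+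
  show "\<And>j. j < length \<alpha> \<Longrightarrow> (if \<sigma> j = x then if \<alpha> ! j then h else g else idm B (Xs ! \<sigma> j))
     \<in> (if \<alpha> ! j then Arr B (subst_obj Xs X Y x \<sigma> \<alpha> ! j) (subst_obj Xs X' Y' x \<sigma> \<alpha> ! j)
        else Arr B (subst_obj Xs X' Y' x \<sigma> \<alpha> ! j) (subst_obj Xs X Y x \<sigma> \<alpha> ! j))"
    using Xs g h by (auto simp: maps_into_def intro!: cat_idm_arr[OF B] nth_mem)
qed simp_all

lemma subst_mor_cmp:
  assumes B: "is_category B"
    and g: "g \<in> Arr B X' X" and h: "h \<in> Arr B Y Y'" and Xs: "maps_into \<sigma> (length \<alpha>) (length Xs)"
    and r_x: "\<forall>j < length \<alpha>. \<sigma> j = x \<longrightarrow> r j = idm B (if \<alpha> ! j then Y else X)"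
    and r: "\<forall>j < length \<alpha>. \<sigma> j \<noteq> x \<longrightarrow>
              r j \<in> (if \<alpha> ! j then Arr B (U j) (reidx Xs \<sigma> (length \<alpha>) ! j)
                       else Arr B (reidx Xs \<sigma> (length \<alpha>) ! j) (U j))"
  shows "cmp (power_cat B \<alpha>) (subst_mor B Xs g h x \<sigma> \<alpha>) (map r [0..<length \<alpha>])
       = map (\<lambda>j. if \<sigma> j = x then (if \<alpha> ! j then h else g) else r j) [0..<length \<alpha>]"
  unfolding subst_mor_def power_cat_cmp_map
  using r_x r cat_idm_left[OF B] cat_idm_right[OF B] cat_idm_left[OF B g] cat_idm_right[OF B h]
  by (intro map_cong) fastforce+

lemma cmp_subst_mor:
  assumes B: "is_category B"
    and g: "g \<in> Arr B X' X" and h: "h \<in> Arr B Y Y'" and Xs: "maps_into \<sigma> (length \<alpha>) (length Xs)"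
    and r_x: "\<forall>j < length \<alpha>. \<sigma> j = x \<longrightarrow> r j = idm B (if \<alpha> ! j then Y' else X')"
    and r: "\<forall>j < length \<alpha>. \<sigma> j \<noteq> x \<longrightarrow>
              r j \<in> (if \<alpha> ! j then Arr B (reidx Xs \<sigma> (length \<alpha>) ! j) (U j)
                       else Arr B (U j) (reidx Xs \<sigma> (length \<alpha>) ! j))"
  shows "cmp (power_cat B \<alpha>) (map r [0..<length \<alpha>]) (subst_mor B Xs g h x \<sigma> \<alpha>)
       = map (\<lambda>j. if \<sigma> j = x then (if \<alpha> ! j then h else g) else r j) [0..<length \<alpha>]"
  unfolding subst_mor_def power_cat_cmp_map
  using r_x r cat_idm_left[OF B] cat_idm_right[OF B] cat_idm_right[OF B g] cat_idm_left[OF B h]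
  by (intro map_cong) fastforce+

lemma dinatural_in_whisker:
  assumes B: "is_category B" and C: "is_category C"
    and F: "is_functor (power_cat B \<alpha>) C Fo Fm" and G: "is_functor (power_cat B \<beta>) C Go Gm"
    and \<phi>: "is_transformation B C \<alpha> \<beta> n \<sigma> \<tau> Fo Go \<phi>"
    and din: "dinatural_in B C \<alpha> \<beta> n \<sigma> \<tau> Fm Gm \<phi> x"
    and Xs: "length Xs = n" "set Xs \<subseteq> Obj B" and f: "f \<in> Arr B A A'"
    and L: "L \<in> Arr C X (Fo (subst_obj Xs A' A x \<sigma> \<alpha>))"
    and R: "R \<in> Arr C (Go (subst_obj Xs A A' x \<tau> \<beta>)) Y"
  shows "cmp C (cmp C R (Gm (subst_mor B Xs (idm B A) f x \<tau> \<beta>)))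
           (cmp C (\<phi> (Xs[x := A])) (cmp C (Fm (subst_mor B Xs f (idm B A) x \<sigma> \<alpha>)) L))
       = cmp C (cmp C R (Gm (subst_mor B Xs f (idm B A') x \<tau> \<beta>)))
           (cmp C (\<phi> (Xs[x := A'])) (cmp C (Fm (subst_mor B Xs (idm B A') f x \<sigma> \<alpha>)) L))"
proof -
  have A: "A \<in> Obj B" "A' \<in> Obj B" using cat_arr_objs[OF B f] by auto
  have \<sigma>: "maps_into \<sigma> (length \<alpha>) (length Xs)" and \<tau>: "maps_into \<tau> (length \<beta>) (length Xs)"
    using \<phi> Xs(1) by (auto simp: is_transformation_def)
  have \<phi>_at: "\<phi> (Xs[x := X]) \<in> Arr C (Fo (subst_obj Xs X X x \<sigma> \<alpha>)) (Go (subst_obj Xs X X x \<tau> \<beta>))"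
    if "X \<in> Obj B" for X
  proof -
    have "set (Xs[x := X]) \<subseteq> Obj B" using Xs(2) that set_update_subset_insert[of Xs x X] by blast
    then show ?thesis
      using transformation_arr[OF \<phi>, of "Xs[x := X]"] Xs(1)
      by (simp add: reidx_list_update[OF \<sigma>] reidx_list_update[OF \<tau>])
  qed
  have F_at: "Fm (subst_mor B Xs g h x \<sigma> \<alpha>) \<in> Arr C (Fo (subst_obj Xs A' A x \<sigma> \<alpha>)) (Fo (subst_obj Xs X X x \<sigma> \<alpha>))"
    if "g \<in> Arr B X A'" "h \<in> Arr B A X" for g h X
    using functor_arr[OF F subst_mor_arr[OF B Xs(2) \<sigma> that]] .
  have G_at: "Gm (subst_mor B Xs g h x \<tau> \<beta>) \<in> Arr C (Go (subst_obj Xs X X x \<tau> \<beta>)) (Go (subst_obj Xs A A' x \<tau> \<beta>))"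
    if "g \<in> Arr B A X" "h \<in> Arr B X A'" for g h X
    using functor_arr[OF G subst_mor_arr[OF B Xs(2) \<tau> that]] .
  have idA: "idm B A \<in> Arr B A A" and idA': "idm B A' \<in> Arr B A' A'"
    using cat_idm_arr[OF B] A by auto
  have hexagon: "cmp C (Gm (subst_mor B Xs (idm B A) f x \<tau> \<beta>))
                   (cmp C (\<phi> (Xs[x := A])) (Fm (subst_mor B Xs f (idm B A) x \<sigma> \<alpha>)))
               = cmp C (Gm (subst_mor B Xs f (idm B A') x \<tau> \<beta>))
                   (cmp C (\<phi> (Xs[x := A'])) (Fm (subst_mor B Xs (idm B A') f x \<sigma> \<alpha>)))"
    using din Xs f unfolding dinatural_in_def by blast
  show ?thesis
    unfolding cat_cmp_reassoc[OF C L F_at[OF f idA] \<phi>_at[OF A(1)] G_at[OF idA f] R]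
      cat_cmp_reassoc[OF C L F_at[OF idA' f] \<phi>_at[OF A(2)] G_at[OF f idA'] R] hexagon ..
qed

lemma acyclic_sweep:
  assumes T: "finite T" and R: "acyclic R" "R \<subseteq> T \<times> T"
    and step: "\<And>S z. S \<subseteq> T \<Longrightarrow> R `` S \<subseteq> S \<Longrightarrow> z \<in> T - S \<Longrightarrow> R `` {z} \<subseteq> S \<Longrightarrow> P S = P (insert z S)"
  shows "P {} = P T"
proof -
  have "finite R" using finite_subset[OF R(2)] T by blast
  then have wf: "wf (R\<inverse>)"
    using finite_acyclic_wf_converse R(1) by blast
  have "P S = P T" if "S \<subseteq> T" "R `` S \<subseteq> S" for S
    using that
  proof (induction "card (T - S)" arbitrary: S rule: less_induct)
    case less
    show ?case
    proof (cases "S = T")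
      case False
      then have "T - S \<noteq> {}" using less.prems(1) by blast
      then obtain z where z: "z \<in> T - S" and sinks: "\<And>w. (w, z) \<in> R\<inverse> \<Longrightarrow> w \<notin> T - S"
        using wf unfolding wf_eq_minimal by (metis ex_in_conv)
      have succ: "R `` {z} \<subseteq> S" using sinks R(2) by blast
      have "card (T - insert z S) < card (T - S)"
        using z T by (metis Diff_insert card_Diff1_less finite_Diff)
      moreover have "insert z S \<subseteq> T" "R `` insert z S \<subseteq> insert z S"
        using z less.prems succ by auto
      ultimately have "P (insert z S) = P T" by (rule less.hyps)
      then show ?thesis using step[OF less.prems z succ] by simp
    qed simp
  qed
  then show ?thesis by blast
qed

locale vcomp_dinaturality_instance =
  fixes B :: "('o, 'm) cat" and C :: "('p, 'q) cat"
    and \<alpha> \<beta> \<gamma> :: "bool list" and n m l i :: nat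
    and \<sigma> \<tau> \<eta> \<theta> \<zeta> \<xi> :: "nat \<Rightarrow> nat"
    and Fo Go Ho :: "'o list \<Rightarrow> 'p" and Fm Gm Hm :: "'m list \<Rightarrow> 'q"
    and \<phi> \<psi> :: "'o list \<Rightarrow> 'q" and As :: "'o list" and A A' :: 'o and f :: 'm
  assumes B_cat: "is_category B" and C_cat: "is_category C"
    and F_functor: "is_functor (power_cat B \<alpha>) C Fo Fm"
    and G_functor: "is_functor (power_cat B \<beta>) C Go Gm"
    and H_functor: "is_functor (power_cat B \<gamma>) C Ho Hm"
    and \<phi>_transformation: "is_transformation B C \<alpha> \<beta> n \<sigma> \<tau> Fo Go \<phi>"
    and \<psi>_transformation: "is_transformation B C \<beta> \<gamma> m \<eta> \<theta> Go Ho \<psi>"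
    and pushout: "is_pushout (length \<beta>) n m \<tau> \<eta> l \<zeta> \<xi>"
    and i_less: "i < l"
    and As: "length As = l" "set As \<subseteq> Obj B"
    and f_arr: "f \<in> Arr B A A'"
    and \<phi>_dinatural: "\<forall>x < n. \<zeta> x = i \<longrightarrow> dinatural_in B C \<alpha> \<beta> n \<sigma> \<tau> Fm Gm \<phi> x"
    and \<psi>_dinatural: "\<forall>y < m. \<xi> y = i \<longrightarrow> dinatural_in B C \<beta> \<gamma> m \<eta> \<theta> Gm Hm \<psi> y"
begin

lemma maps_into:
  "maps_into \<sigma> (length \<alpha>) n" "maps_into \<tau> (length \<beta>) n"
  "maps_into \<eta> (length \<beta>) m" "maps_into \<theta> (length \<gamma>) m"
  "maps_into \<zeta> n l" "maps_into \<xi> m l"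
  using \<phi>_transformation \<psi>_transformation pushout
  by (auto simp: is_transformation_def is_pushout_def)

lemma less_bounds:
  "j < length \<alpha> \<Longrightarrow> \<sigma> j < n" "j < length \<beta> \<Longrightarrow> \<tau> j < n"
  "j < length \<beta> \<Longrightarrow> \<eta> j < m" "j < length \<gamma> \<Longrightarrow> \<theta> j < m"
  "x < n \<Longrightarrow> \<zeta> x < l" "y < m \<Longrightarrow> \<xi> y < l"
  using maps_into by (auto simp: maps_into_def)

lemma pushout_commutes: "j < length \<beta> \<Longrightarrow> \<zeta> (\<tau> j) = \<xi> (\<eta> j)"
  using pushout by (auto simp: is_pushout_def)

lemma A_obj: "A \<in> Obj B" "A' \<in> Obj B"
  using cat_arr_objs[OF B_cat f_arr] by auto

lemma As_nth_obj: "k < l \<Longrightarrow> As ! k \<in> Obj B"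
  using As by auto

text \<open>The composite is moved from the instance at A to the instance at A' one transition of the
  i-th component at a time; a node set S records the transitions already moved.\<close>

definition stage_obj :: "bool \<Rightarrow> 'o" where
  "stage_obj b = (if b then A' else A)"

definition stage_mor :: "bool \<Rightarrow> bool \<Rightarrow> 'm" where
  "stage_mor b b' = (if b = b' then idm B (stage_obj b) else f)"

lemma stage_obj_simps [simp]: "stage_obj True = A'" "stage_obj False = A"
  by (simp_all add: stage_obj_def)

lemma stage_obj_obj [simp]: "stage_obj b \<in> Obj B"
  using A_obj by (simp add: stage_obj_def)

lemma stage_mor_simps [simp]: "stage_mor b b = idm B (stage_obj b)" "stage_mor False True = f"
  by (simp_all add: stage_mor_def)

lemma stage_mor_arr: "\<not> (b \<and> \<not> b') \<Longrightarrow> stage_mor b b' \<in> Arr B (stage_obj b) (stage_obj b')"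
  using f_arr cat_idm_arr[OF B_cat] by (auto simp: stage_mor_def)

lemma stage_mor_from_A: "stage_mor False b \<in> Arr B A (stage_obj b)"
  using stage_mor_arr[of False b] by simp

lemma stage_mor_to_A': "stage_mor b True \<in> Arr B (stage_obj b) A'"
  using stage_mor_arr[of b True] by simp

definition objN :: "node set \<Rightarrow> nat \<Rightarrow> 'o" where
  "objN S x = (if \<zeta> x = i then stage_obj (TN x \<in> S) else As ! \<zeta> x)"

definition objM :: "node set \<Rightarrow> nat \<Rightarrow> 'o" where
  "objM S y = (if \<xi> y = i then stage_obj (TM y \<in> S) else As ! \<xi> y)"

definition argsN :: "node set \<Rightarrow> 'o list" where
  "argsN S = map (objN S) [0..<n]"

definition argsM :: "node set \<Rightarrow> 'o list" where
  "argsM S = map (objM S) [0..<m]"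

definition morA :: "node set \<Rightarrow> nat \<Rightarrow> 'm" where
  "morA S j = (if \<zeta> (\<sigma> j) = i
     then (if \<alpha> ! j then stage_mor False (TN (\<sigma> j) \<in> S) else stage_mor (TN (\<sigma> j) \<in> S) True)
     else idm B (As ! \<zeta> (\<sigma> j)))"

definition morB :: "node set \<Rightarrow> nat \<Rightarrow> 'm" where
  "morB S j = (if \<zeta> (\<tau> j) = i
     then (if \<beta> ! j then stage_mor (TN (\<tau> j) \<in> S) (TM (\<eta> j) \<in> S)
           else stage_mor (TM (\<eta> j) \<in> S) (TN (\<tau> j) \<in> S))
     else idm B (As ! \<zeta> (\<tau> j)))"

definition morC :: "node set \<Rightarrow> nat \<Rightarrow> 'm" where
  "morC S j = (if \<xi> (\<theta> j) = i
     then (if \<gamma> ! j then stage_mor (TM (\<theta> j) \<in> S) True else stage_mor False (TM (\<theta> j) \<in> S))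
     else idm B (As ! \<xi> (\<theta> j)))"

definition stage :: "node set \<Rightarrow> 'q" where
  "stage S = cmp C (Hm (map (morC S) [0..<length \<gamma>]))
     (cmp C (\<psi> (argsM S)) (cmp C (Gm (map (morB S) [0..<length \<beta>]))
       (cmp C (\<phi> (argsN S)) (Fm (map (morA S) [0..<length \<alpha>])))))"

definition transitions :: "node set" where
  "transitions = TN ` {x. x < n \<and> \<zeta> x = i} \<union> TM ` {y. y < m \<and> \<xi> y = i}"

text \<open>Two transitions of the component are joined by a directed path through a place of G.\<close>
definition flow :: "(node \<times> node) set" where
  "flow = {(TN (\<tau> j), TM (\<eta> j)) | j. j < length \<beta> \<and> \<beta> ! j \<and> \<zeta> (\<tau> j) = i}
        \<union> {(TM (\<eta> j), TN (\<tau> j)) | j. j < length \<beta> \<and> \<not> \<beta> ! j \<and> \<xi> (\<eta> j) = i}"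

lemma objN_obj: "x < n \<Longrightarrow> objN S x \<in> Obj B"
  using As_nth_obj less_bounds by (simp add: objN_def)

lemma objM_obj: "y < m \<Longrightarrow> objM S y \<in> Obj B"
  using As_nth_obj less_bounds by (simp add: objM_def)

lemma argsN_objs: "length (argsN S) = n" "set (argsN S) \<subseteq> Obj B"
  using objN_obj by (auto simp: argsN_def)

lemma argsM_objs: "length (argsM S) = m" "set (argsM S) \<subseteq> Obj B"
  using objM_obj by (auto simp: argsM_def)

lemma argsN_nth: "x < n \<Longrightarrow> argsN S ! x = objN S x"
  by (simp add: argsN_def)

lemma argsM_nth: "y < m \<Longrightarrow> argsM S ! y = objM S y"
  by (simp add: argsM_def)

lemma morA_arr:
  "j < length \<alpha> \<Longrightarrow> morA S j \<in> (if \<alpha> ! j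
     then Arr B (subst_obj As A' A i (\<zeta> \<circ> \<sigma>) \<alpha> ! j) (reidx (argsN S) \<sigma> (length \<alpha>) ! j)
     else Arr B (reidx (argsN S) \<sigma> (length \<alpha>) ! j) (subst_obj As A' A i (\<zeta> \<circ> \<sigma>) \<alpha> ! j))"
  using less_bounds As_nth_obj cat_idm_arr[OF B_cat]
  by (auto simp: morA_def argsN_nth objN_def intro: stage_mor_from_A stage_mor_to_A')

lemma flow_edges:
  assumes "j < length \<beta>" "\<zeta> (\<tau> j) = i"
  shows "\<beta> ! j \<Longrightarrow> (TN (\<tau> j), TM (\<eta> j)) \<in> flow" "\<not> \<beta> ! j \<Longrightarrow> (TM (\<eta> j), TN (\<tau> j)) \<in> flow"
  using assms pushout_commutes[OF assms(1)] unfolding flow_def by auto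

lemma morB_arr:
  assumes S: "flow `` S \<subseteq> S" and j: "j < length \<beta>"
  shows "morB S j \<in> (if \<beta> ! j then Arr B (reidx (argsN S) \<tau> (length \<beta>) ! j) (reidx (argsM S) \<eta> (length \<beta>) ! j)
                    else Arr B (reidx (argsM S) \<eta> (length \<beta>) ! j) (reidx (argsN S) \<tau> (length \<beta>) ! j))"
proof (cases "\<zeta> (\<tau> j) = i")
  case True
  have "\<beta> ! j \<Longrightarrow> TN (\<tau> j) \<in> S \<Longrightarrow> TM (\<eta> j) \<in> S" "\<not> \<beta> ! j \<Longrightarrow> TM (\<eta> j) \<in> S \<Longrightarrow> TN (\<tau> j) \<in> S"
    using S flow_edges[OF j True] by blast+
  then show ?thesis
    using True j less_bounds pushout_commutes[OF j]
    by (auto simp: morB_def argsN_nth argsM_nth objN_def objM_def intro!: stage_mor_arr)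
next
  case False
  then show ?thesis
    using j less_bounds As_nth_obj pushout_commutes[OF j] cat_idm_arr[OF B_cat]
    by (auto simp: morB_def argsN_nth argsM_nth objN_def objM_def)
qed

lemma morC_arr:
  "j < length \<gamma> \<Longrightarrow> morC S j \<in> (if \<gamma> ! j
     then Arr B (reidx (argsM S) \<theta> (length \<gamma>) ! j) (subst_obj As A A' i (\<xi> \<circ> \<theta>) \<gamma> ! j)
     else Arr B (subst_obj As A A' i (\<xi> \<circ> \<theta>) \<gamma> ! j) (reidx (argsM S) \<theta> (length \<gamma>) ! j))"
  using less_bounds As_nth_obj cat_idm_arr[OF B_cat]
  by (auto simp: morC_def argsM_nth objM_def intro: stage_mor_from_A stage_mor_to_A')

lemma set_argsN_reidx: "maps_into \<rho> k n \<Longrightarrow> set (reidx (argsN S) \<rho> k) \<subseteq> Obj B"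
  using set_reidx[of \<rho> k "argsN S"] argsN_objs by auto

lemma set_argsM_reidx: "maps_into \<rho> k m \<Longrightarrow> set (reidx (argsM S) \<rho> k) \<subseteq> Obj B"
  using set_reidx[of \<rho> k "argsM S"] argsM_objs by auto

lemma set_As_subst_obj: "maps_into \<rho> (length \<delta>) l \<Longrightarrow> set (subst_obj As X Y i \<rho> \<delta>) \<subseteq> Obj B"
  if "X \<in> Obj B" "Y \<in> Obj B"
  using set_subst_obj[of \<rho> \<delta> As X Y i] As that by auto

lemma set_argsN_subst_obj: "maps_into \<rho> (length \<delta>) n \<Longrightarrow> set (subst_obj (argsN S) X Y x \<rho> \<delta>) \<subseteq> Obj B"
  if "X \<in> Obj B" "Y \<in> Obj B"
  using set_subst_obj[of \<rho> \<delta> "argsN S" X Y x] argsN_objs that by auto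

lemma set_argsM_subst_obj: "maps_into \<rho> (length \<delta>) m \<Longrightarrow> set (subst_obj (argsM S) X Y x \<rho> \<delta>) \<subseteq> Obj B"
  if "X \<in> Obj B" "Y \<in> Obj B"
  using set_subst_obj[of \<rho> \<delta> "argsM S" X Y x] argsM_objs that by auto

lemma maps_into_composites: "maps_into (\<zeta> \<circ> \<sigma>) (length \<alpha>) l" "maps_into (\<xi> \<circ> \<theta>) (length \<gamma>) l"
  using maps_into by (auto simp: maps_into_def)

lemma morsA_arr:
  "map (morA S) [0..<length \<alpha>]
     \<in> Arr (power_cat B \<alpha>) (subst_obj As A' A i (\<zeta> \<circ> \<sigma>) \<alpha>) (reidx (argsN S) \<sigma> (length \<alpha>))"
  using A_obj maps_into maps_into_composites
  by (intro power_cat_arrI set_argsN_reidx set_As_subst_obj morA_arr) auto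

lemma morsA_factor:
  assumes x: "\<zeta> x = i" "TN x \<notin> S"
  obtains R where
    "R \<in> Arr (power_cat B \<alpha>) (subst_obj As A' A i (\<zeta> \<circ> \<sigma>) \<alpha>) (subst_obj (argsN S) A' A x \<sigma> \<alpha>)"
    "map (morA S) [0..<length \<alpha>] = cmp (power_cat B \<alpha>) (subst_mor B (argsN S) f (idm B A) x \<sigma> \<alpha>) R"
    "map (morA (insert (TN x) S)) [0..<length \<alpha>]
       = cmp (power_cat B \<alpha>) (subst_mor B (argsN S) (idm B A') f x \<sigma> \<alpha>) R"
proof
  define r where "r j = (if \<sigma> j = x then idm B (if \<alpha> ! j then A else A') else morA S j)" for j
  have \<sigma>: "maps_into \<sigma> (length \<alpha>) (length (argsN S))"
    using maps_into argsN_objs by simp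
  have r_x: "\<forall>j < length \<alpha>. \<sigma> j = x \<longrightarrow> r j = idm B (if \<alpha> ! j then A else A')"
    by (simp add: r_def)
  have r_rest: "\<forall>j < length \<alpha>. \<sigma> j \<noteq> x \<longrightarrow> r j \<in> (if \<alpha> ! j
      then Arr B (subst_obj As A' A i (\<zeta> \<circ> \<sigma>) \<alpha> ! j) (reidx (argsN S) \<sigma> (length \<alpha>) ! j)
      else Arr B (reidx (argsN S) \<sigma> (length \<alpha>) ! j) (subst_obj As A' A i (\<zeta> \<circ> \<sigma>) \<alpha> ! j))"
    by (simp add: r_def morA_arr split del: if_split)
  show "map r [0..<length \<alpha>]
      \<in> Arr (power_cat B \<alpha>) (subst_obj As A' A i (\<zeta> \<circ> \<sigma>) \<alpha>) (subst_obj (argsN S) A' A x \<sigma> \<alpha>)"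
  proof (rule power_cat_arrI)
    fix j assume j: "j < length \<alpha>"
    show "r j \<in> (if \<alpha> ! j
        then Arr B (subst_obj As A' A i (\<zeta> \<circ> \<sigma>) \<alpha> ! j) (subst_obj (argsN S) A' A x \<sigma> \<alpha> ! j)
        else Arr B (subst_obj (argsN S) A' A x \<sigma> \<alpha> ! j) (subst_obj As A' A i (\<zeta> \<circ> \<sigma>) \<alpha> ! j))"
      using j r_x r_rest x A_obj cat_idm_arr[OF B_cat] by (cases "\<sigma> j = x") auto
  qed (simp_all add: A_obj maps_into maps_into_composites set_As_subst_obj set_argsN_subst_obj)
  show "map (morA S) [0..<length \<alpha>] = cmp (power_cat B \<alpha>) (subst_mor B (argsN S) f (idm B A) x \<sigma> \<alpha>) (map r [0..<length \<alpha>])"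
    unfolding subst_mor_cmp[OF B_cat f_arr cat_idm_arr[OF B_cat A_obj(1)] \<sigma> r_x r_rest]
    using x by (auto simp: r_def morA_def)
  show "map (morA (insert (TN x) S)) [0..<length \<alpha>]
      = cmp (power_cat B \<alpha>) (subst_mor B (argsN S) (idm B A') f x \<sigma> \<alpha>) (map r [0..<length \<alpha>])"
    unfolding subst_mor_cmp[OF B_cat cat_idm_arr[OF B_cat A_obj(2)] f_arr \<sigma> r_x r_rest]
    using x by (auto simp: r_def morA_def)
qed

lemma morsB_factor_at_TN:
  assumes x: "\<zeta> x = i" "TN x \<notin> S" and S: "flow `` S \<subseteq> S" "flow `` {TN x} \<subseteq> S"
  obtains R where
    "R \<in> Arr (power_cat B \<beta>) (subst_obj (argsN S) A A' x \<tau> \<beta>) (reidx (argsM S) \<eta> (length \<beta>))"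
    "map (morB S) [0..<length \<beta>] = cmp (power_cat B \<beta>) R (subst_mor B (argsN S) (idm B A) f x \<tau> \<beta>)"
    "map (morB (insert (TN x) S)) [0..<length \<beta>]
       = cmp (power_cat B \<beta>) R (subst_mor B (argsN S) f (idm B A') x \<tau> \<beta>)"
proof
  define r where "r j = (if \<tau> j = x then idm B (if \<beta> ! j then A' else A) else morB S j)" for j
  have \<tau>: "maps_into \<tau> (length \<beta>) (length (argsN S))"
    using maps_into argsN_objs by simp
  have r_x: "\<forall>j < length \<beta>. \<tau> j = x \<longrightarrow> r j = idm B (if \<beta> ! j then A' else A)"
    by (simp add: r_def)
  have r_rest: "\<forall>j < length \<beta>. \<tau> j \<noteq> x \<longrightarrow> r j \<in> (if \<beta> ! j
      then Arr B (reidx (argsN S) \<tau> (length \<beta>) ! j) (reidx (argsM S) \<eta> (length \<beta>) ! j)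
      else Arr B (reidx (argsM S) \<eta> (length \<beta>) ! j) (reidx (argsN S) \<tau> (length \<beta>) ! j))"
    using S(1) by (simp add: r_def morB_arr split del: if_split)
  have moved: "TM (\<eta> j) \<in> S \<longleftrightarrow> \<beta> ! j" if "j < length \<beta>" "\<tau> j = x" for j
    using flow_edges[of j] that x S by blast
  have target: "argsM S ! \<eta> j = (if \<beta> ! j then A' else A)" if "j < length \<beta>" "\<tau> j = x" for j
  proof -
    have "\<xi> (\<eta> j) = i" using pushout_commutes[OF that(1)] that(2) x(1) by simp
    then show ?thesis using that moved[OF that] less_bounds by (simp add: argsM_nth objM_def)
  qed
  show "map r [0..<length \<beta>]
      \<in> Arr (power_cat B \<beta>) (subst_obj (argsN S) A A' x \<tau> \<beta>) (reidx (argsM S) \<eta> (length \<beta>))"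
  proof (rule power_cat_arrI)
    fix j assume j: "j < length \<beta>"
    show "r j \<in> (if \<beta> ! j
        then Arr B (subst_obj (argsN S) A A' x \<tau> \<beta> ! j) (reidx (argsM S) \<eta> (length \<beta>) ! j)
        else Arr B (reidx (argsM S) \<eta> (length \<beta>) ! j) (subst_obj (argsN S) A A' x \<tau> \<beta> ! j))"
      using j r_x r_rest target A_obj cat_idm_arr[OF B_cat] by (cases "\<tau> j = x") auto
  qed (simp_all add: A_obj maps_into set_argsN_subst_obj set_argsM_reidx)
  show "map (morB S) [0..<length \<beta>] = cmp (power_cat B \<beta>) (map r [0..<length \<beta>]) (subst_mor B (argsN S) (idm B A) f x \<tau> \<beta>)"
    unfolding cmp_subst_mor[OF B_cat cat_idm_arr[OF B_cat A_obj(1)] f_arr \<tau> r_x r_rest]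
    using x moved by (auto simp: r_def morB_def)
  show "map (morB (insert (TN x) S)) [0..<length \<beta>]
      = cmp (power_cat B \<beta>) (map r [0..<length \<beta>]) (subst_mor B (argsN S) f (idm B A') x \<tau> \<beta>)"
    unfolding cmp_subst_mor[OF B_cat f_arr cat_idm_arr[OF B_cat A_obj(2)] \<tau> r_x r_rest]
    using x moved by (auto simp: r_def morB_def)
qed

lemma morsB_factor_at_TM:
  assumes y: "\<xi> y = i" "TM y \<notin> S" and S: "flow `` S \<subseteq> S" "flow `` {TM y} \<subseteq> S"
  obtains R where
    "R \<in> Arr (power_cat B \<beta>) (reidx (argsN S) \<tau> (length \<beta>)) (subst_obj (argsM S) A' A y \<eta> \<beta>)"
    "map (morB S) [0..<length \<beta>] = cmp (power_cat B \<beta>) (subst_mor B (argsM S) f (idm B A) y \<eta> \<beta>) R"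
    "map (morB (insert (TM y) S)) [0..<length \<beta>]
       = cmp (power_cat B \<beta>) (subst_mor B (argsM S) (idm B A') f y \<eta> \<beta>) R"
proof
  define r where "r j = (if \<eta> j = y then idm B (if \<beta> ! j then A else A') else morB S j)" for j
  have \<eta>: "maps_into \<eta> (length \<beta>) (length (argsM S))"
    using maps_into argsM_objs by simp
  have r_y: "\<forall>j < length \<beta>. \<eta> j = y \<longrightarrow> r j = idm B (if \<beta> ! j then A else A')"
    by (simp add: r_def)
  have r_rest: "\<forall>j < length \<beta>. \<eta> j \<noteq> y \<longrightarrow> r j \<in> (if \<beta> ! j
      then Arr B (reidx (argsN S) \<tau> (length \<beta>) ! j) (reidx (argsM S) \<eta> (length \<beta>) ! j)
      else Arr B (reidx (argsM S) \<eta> (length \<beta>) ! j) (reidx (argsN S) \<tau> (length \<beta>) ! j))"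
    using S(1) by (simp add: r_def morB_arr split del: if_split)
  have in_component: "\<zeta> (\<tau> j) = i" if "j < length \<beta>" "\<eta> j = y" for j
    using that y pushout_commutes by simp
  have moved: "TN (\<tau> j) \<in> S \<longleftrightarrow> \<not> \<beta> ! j" if "j < length \<beta>" "\<eta> j = y" for j
    using flow_edges[OF that(1) in_component[OF that]] that y S by blast
  have source: "argsN S ! \<tau> j = (if \<beta> ! j then A else A')" if "j < length \<beta>" "\<eta> j = y" for j
    using that moved[OF that] in_component[OF that] less_bounds by (simp add: argsN_nth objN_def)
  show "map r [0..<length \<beta>]
      \<in> Arr (power_cat B \<beta>) (reidx (argsN S) \<tau> (length \<beta>)) (subst_obj (argsM S) A' A y \<eta> \<beta>)"
  proof (rule power_cat_arrI)
    fix j assume j: "j < length \<beta>"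
    show "r j \<in> (if \<beta> ! j
        then Arr B (reidx (argsN S) \<tau> (length \<beta>) ! j) (subst_obj (argsM S) A' A y \<eta> \<beta> ! j)
        else Arr B (subst_obj (argsM S) A' A y \<eta> \<beta> ! j) (reidx (argsN S) \<tau> (length \<beta>) ! j))"
      using j r_y r_rest source A_obj cat_idm_arr[OF B_cat] by (cases "\<eta> j = y") auto
  qed (simp_all add: A_obj maps_into set_argsM_subst_obj set_argsN_reidx)
  show "map (morB S) [0..<length \<beta>] = cmp (power_cat B \<beta>) (subst_mor B (argsM S) f (idm B A) y \<eta> \<beta>) (map r [0..<length \<beta>])"
    unfolding subst_mor_cmp[OF B_cat f_arr cat_idm_arr[OF B_cat A_obj(1)] \<eta> r_y r_rest]
    using y moved in_component by (auto simp: r_def morB_def)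
  show "map (morB (insert (TM y) S)) [0..<length \<beta>]
      = cmp (power_cat B \<beta>) (subst_mor B (argsM S) (idm B A') f y \<eta> \<beta>) (map r [0..<length \<beta>])"
    unfolding subst_mor_cmp[OF B_cat cat_idm_arr[OF B_cat A_obj(2)] f_arr \<eta> r_y r_rest]
    using y moved in_component by (auto simp: r_def morB_def)
qed

lemma morsC_factor:
  assumes y: "\<xi> y = i" "TM y \<notin> S"
  obtains R where
    "R \<in> Arr (power_cat B \<gamma>) (subst_obj (argsM S) A A' y \<theta> \<gamma>) (subst_obj As A A' i (\<xi> \<circ> \<theta>) \<gamma>)"
    "map (morC S) [0..<length \<gamma>] = cmp (power_cat B \<gamma>) R (subst_mor B (argsM S) (idm B A) f y \<theta> \<gamma>)"
    "map (morC (insert (TM y) S)) [0..<length \<gamma>]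
       = cmp (power_cat B \<gamma>) R (subst_mor B (argsM S) f (idm B A') y \<theta> \<gamma>)"
proof
  define r where "r j = (if \<theta> j = y then idm B (if \<gamma> ! j then A' else A) else morC S j)" for j
  have \<theta>: "maps_into \<theta> (length \<gamma>) (length (argsM S))"
    using maps_into argsM_objs by simp
  have r_y: "\<forall>j < length \<gamma>. \<theta> j = y \<longrightarrow> r j = idm B (if \<gamma> ! j then A' else A)"
    by (simp add: r_def)
  have r_rest: "\<forall>j < length \<gamma>. \<theta> j \<noteq> y \<longrightarrow> r j \<in> (if \<gamma> ! j
      then Arr B (reidx (argsM S) \<theta> (length \<gamma>) ! j) (subst_obj As A A' i (\<xi> \<circ> \<theta>) \<gamma> ! j)
      else Arr B (subst_obj As A A' i (\<xi> \<circ> \<theta>) \<gamma> ! j) (reidx (argsM S) \<theta> (length \<gamma>) ! j))"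
    by (simp add: r_def morC_arr split del: if_split)
  show "map r [0..<length \<gamma>]
      \<in> Arr (power_cat B \<gamma>) (subst_obj (argsM S) A A' y \<theta> \<gamma>) (subst_obj As A A' i (\<xi> \<circ> \<theta>) \<gamma>)"
  proof (rule power_cat_arrI)
    fix j assume j: "j < length \<gamma>"
    show "r j \<in> (if \<gamma> ! j
        then Arr B (subst_obj (argsM S) A A' y \<theta> \<gamma> ! j) (subst_obj As A A' i (\<xi> \<circ> \<theta>) \<gamma> ! j)
        else Arr B (subst_obj As A A' i (\<xi> \<circ> \<theta>) \<gamma> ! j) (subst_obj (argsM S) A A' y \<theta> \<gamma> ! j))"
      using j r_y r_rest y A_obj cat_idm_arr[OF B_cat] by (cases "\<theta> j = y") auto
  qed (simp_all add: A_obj maps_into maps_into_composites set_As_subst_obj set_argsM_subst_obj)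
  show "map (morC S) [0..<length \<gamma>] = cmp (power_cat B \<gamma>) (map r [0..<length \<gamma>]) (subst_mor B (argsM S) (idm B A) f y \<theta> \<gamma>)"
    unfolding cmp_subst_mor[OF B_cat cat_idm_arr[OF B_cat A_obj(1)] f_arr \<theta> r_y r_rest]
    using y by (auto simp: r_def morC_def)
  show "map (morC (insert (TM y) S)) [0..<length \<gamma>]
      = cmp (power_cat B \<gamma>) (map r [0..<length \<gamma>]) (subst_mor B (argsM S) f (idm B A') y \<theta> \<gamma>)"
    unfolding cmp_subst_mor[OF B_cat f_arr cat_idm_arr[OF B_cat A_obj(2)] \<theta> r_y r_rest]
    using y by (auto simp: r_def morC_def)
qed

lemma argsN_update_unmoved: "x < n \<Longrightarrow> \<zeta> x = i \<Longrightarrow> TN x \<notin> S \<Longrightarrow> (argsN S)[x := A] = argsN S"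
  unfolding argsN_def objN_def by (auto intro!: nth_equalityI simp: nth_list_update)

lemma argsN_update_moved: "x < n \<Longrightarrow> \<zeta> x = i \<Longrightarrow> (argsN S)[x := A'] = argsN (insert (TN x) S)"
  unfolding argsN_def objN_def by (auto intro!: nth_equalityI simp: nth_list_update)

lemma argsM_update_unmoved: "y < m \<Longrightarrow> \<xi> y = i \<Longrightarrow> TM y \<notin> S \<Longrightarrow> (argsM S)[y := A] = argsM S"
  unfolding argsM_def objM_def by (auto intro!: nth_equalityI simp: nth_list_update)

lemma argsM_update_moved: "y < m \<Longrightarrow> \<xi> y = i \<Longrightarrow> (argsM S)[y := A'] = argsM (insert (TM y) S)"
  unfolding argsM_def objM_def by (auto intro!: nth_equalityI simp: nth_list_update)

lemma insert_TN_unchanged: "argsM (insert (TN x) S) = argsM S" "morC (insert (TN x) S) = morC S"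
  by (auto simp: argsM_def objM_def morC_def)

lemma insert_TM_unchanged: "argsN (insert (TM y) S) = argsN S" "morA (insert (TM y) S) = morA S"
  by (auto simp: argsN_def objN_def morA_def)

lemma \<phi>_at_argsN:
  "\<phi> (argsN S) \<in> Arr C (Fo (reidx (argsN S) \<sigma> (length \<alpha>))) (Go (reidx (argsN S) \<tau> (length \<beta>)))"
  using transformation_arr[OF \<phi>_transformation argsN_objs] .

lemma \<psi>_at_argsM:
  "\<psi> (argsM S) \<in> Arr C (Go (reidx (argsM S) \<eta> (length \<beta>))) (Ho (reidx (argsM S) \<theta> (length \<gamma>)))"
  using transformation_arr[OF \<psi>_transformation argsM_objs] .

lemma stage_insert_TN:
  assumes x: "x < n" "\<zeta> x = i" "TN x \<notin> S" and S: "flow `` S \<subseteq> S" "flow `` {TN x} \<subseteq> S"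
  shows "stage S = stage (insert (TN x) S)"
proof -
  obtain RA where RA:
    "RA \<in> Arr (power_cat B \<alpha>) (subst_obj As A' A i (\<zeta> \<circ> \<sigma>) \<alpha>) (subst_obj (argsN S) A' A x \<sigma> \<alpha>)"
    "map (morA S) [0..<length \<alpha>] = cmp (power_cat B \<alpha>) (subst_mor B (argsN S) f (idm B A) x \<sigma> \<alpha>) RA"
    "map (morA (insert (TN x) S)) [0..<length \<alpha>]
       = cmp (power_cat B \<alpha>) (subst_mor B (argsN S) (idm B A') f x \<sigma> \<alpha>) RA"
    using morsA_factor[OF x(2,3)] .
  obtain RB where RB:
    "RB \<in> Arr (power_cat B \<beta>) (subst_obj (argsN S) A A' x \<tau> \<beta>) (reidx (argsM S) \<eta> (length \<beta>))"
    "map (morB S) [0..<length \<beta>] = cmp (power_cat B \<beta>) RB (subst_mor B (argsN S) (idm B A) f x \<tau> \<beta>)"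
    "map (morB (insert (TN x) S)) [0..<length \<beta>]
       = cmp (power_cat B \<beta>) RB (subst_mor B (argsN S) f (idm B A') x \<tau> \<beta>)"
    using morsB_factor_at_TN[OF x(2,3) S] .
  have \<sigma>: "maps_into \<sigma> (length \<alpha>) (length (argsN S))" and \<tau>: "maps_into \<tau> (length \<beta>) (length (argsN S))"
    using maps_into argsN_objs by simp_all
  note subst_arr = subst_mor_arr[OF B_cat argsN_objs(2)]
  have idA: "idm B A \<in> Arr B A A" and idA': "idm B A' \<in> Arr B A' A'"
    using cat_idm_arr[OF B_cat] A_obj by auto
  have din: "dinatural_in B C \<alpha> \<beta> n \<sigma> \<tau> Fm Gm \<phi> x"
    using \<phi>_dinatural x by blast
  have hexagon:
    "cmp C (cmp C (Gm RB) (Gm (subst_mor B (argsN S) (idm B A) f x \<tau> \<beta>)))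
       (cmp C (\<phi> (argsN S)) (cmp C (Fm (subst_mor B (argsN S) f (idm B A) x \<sigma> \<alpha>)) (Fm RA)))
   = cmp C (cmp C (Gm RB) (Gm (subst_mor B (argsN S) f (idm B A') x \<tau> \<beta>)))
       (cmp C (\<phi> (argsN (insert (TN x) S))) (cmp C (Fm (subst_mor B (argsN S) (idm B A') f x \<sigma> \<alpha>)) (Fm RA)))"
    using dinatural_in_whisker[OF B_cat C_cat F_functor G_functor \<phi>_transformation din argsN_objs f_arr
        functor_arr[OF F_functor RA(1)] functor_arr[OF G_functor RB(1)]]
    by (simp only: argsN_update_unmoved[OF x] argsN_update_moved[OF x(1,2)])
  show ?thesis
    unfolding stage_def RA(2,3) RB(2,3) insert_TN_unchanged
      functor_cmp[OF F_functor RA(1) subst_arr[OF \<sigma> f_arr idA]]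
      functor_cmp[OF F_functor RA(1) subst_arr[OF \<sigma> idA' f_arr]]
      functor_cmp[OF G_functor subst_arr[OF \<tau> idA f_arr] RB(1)]
      functor_cmp[OF G_functor subst_arr[OF \<tau> f_arr idA'] RB(1)]
      hexagon ..
qed

lemma stage_insert_TM:
  assumes y: "y < m" "\<xi> y = i" "TM y \<notin> S" and S: "flow `` S \<subseteq> S" "flow `` {TM y} \<subseteq> S"
  shows "stage S = stage (insert (TM y) S)"
proof -
  obtain RB where RB:
    "RB \<in> Arr (power_cat B \<beta>) (reidx (argsN S) \<tau> (length \<beta>)) (subst_obj (argsM S) A' A y \<eta> \<beta>)"
    "map (morB S) [0..<length \<beta>] = cmp (power_cat B \<beta>) (subst_mor B (argsM S) f (idm B A) y \<eta> \<beta>) RB"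
    "map (morB (insert (TM y) S)) [0..<length \<beta>]
       = cmp (power_cat B \<beta>) (subst_mor B (argsM S) (idm B A') f y \<eta> \<beta>) RB"
    using morsB_factor_at_TM[OF y(2,3) S] .
  obtain RC where RC:
    "RC \<in> Arr (power_cat B \<gamma>) (subst_obj (argsM S) A A' y \<theta> \<gamma>) (subst_obj As A A' i (\<xi> \<circ> \<theta>) \<gamma>)"
    "map (morC S) [0..<length \<gamma>] = cmp (power_cat B \<gamma>) RC (subst_mor B (argsM S) (idm B A) f y \<theta> \<gamma>)"
    "map (morC (insert (TM y) S)) [0..<length \<gamma>]
       = cmp (power_cat B \<gamma>) RC (subst_mor B (argsM S) f (idm B A') y \<theta> \<gamma>)"
    using morsC_factor[OF y(2,3)] .
  have \<eta>: "maps_into \<eta> (length \<beta>) (length (argsM S))" and \<theta>: "maps_into \<theta> (length \<gamma>) (length (argsM S))"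
    using maps_into argsM_objs by simp_all
  note subst_arr = subst_mor_arr[OF B_cat argsM_objs(2)]
  have idA: "idm B A \<in> Arr B A A" and idA': "idm B A' \<in> Arr B A' A'"
    using cat_idm_arr[OF B_cat] A_obj by auto
  define Z where "Z = cmp C (\<phi> (argsN S)) (Fm (map (morA S) [0..<length \<alpha>]))"
  have Z: "Z \<in> Arr C (Fo (subst_obj As A' A i (\<zeta> \<circ> \<sigma>) \<alpha>)) (Go (reidx (argsN S) \<tau> (length \<beta>)))"
    unfolding Z_def using cat_cmp_arr[OF C_cat functor_arr[OF F_functor morsA_arr] \<phi>_at_argsN] .
  have GRB: "Gm RB \<in> Arr C (Go (reidx (argsN S) \<tau> (length \<beta>))) (Go (subst_obj (argsM S) A' A y \<eta> \<beta>))"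
    using functor_arr[OF G_functor RB(1)] .
  have G_split: "cmp C (Gm (cmp (power_cat B \<beta>) (subst_mor B (argsM S) g h y \<eta> \<beta>) RB)) Z
      = cmp C (Gm (subst_mor B (argsM S) g h y \<eta> \<beta>)) (cmp C (Gm RB) Z)"
    if "g \<in> Arr B X A'" "h \<in> Arr B A X" for g h X
    using cat_cmp_assoc[OF C_cat Z GRB functor_arr[OF G_functor subst_arr[OF \<eta> that]]]
      functor_cmp[OF G_functor RB(1) subst_arr[OF \<eta> that]] by simp
  have din: "dinatural_in B C \<beta> \<gamma> m \<eta> \<theta> Gm Hm \<psi> y"
    using \<psi>_dinatural y by blast
  have hexagon:
    "cmp C (cmp C (Hm RC) (Hm (subst_mor B (argsM S) (idm B A) f y \<theta> \<gamma>)))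
       (cmp C (\<psi> (argsM S)) (cmp C (Gm (subst_mor B (argsM S) f (idm B A) y \<eta> \<beta>)) (cmp C (Gm RB) Z)))
   = cmp C (cmp C (Hm RC) (Hm (subst_mor B (argsM S) f (idm B A') y \<theta> \<gamma>)))
       (cmp C (\<psi> (argsM (insert (TM y) S))) (cmp C (Gm (subst_mor B (argsM S) (idm B A') f y \<eta> \<beta>)) (cmp C (Gm RB) Z)))"
    using dinatural_in_whisker[OF B_cat C_cat G_functor H_functor \<psi>_transformation din argsM_objs f_arr
        cat_cmp_arr[OF C_cat Z GRB] functor_arr[OF H_functor RC(1)]]
    by (simp only: argsM_update_unmoved[OF y] argsM_update_moved[OF y(1,2)])
  show ?thesis
    unfolding stage_def RB(2,3) RC(2,3) insert_TM_unchanged Z_def[symmetric]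
      G_split[OF f_arr idA] G_split[OF idA' f_arr]
      functor_cmp[OF H_functor subst_arr[OF \<theta> idA f_arr] RC(1)]
      functor_cmp[OF H_functor subst_arr[OF \<theta> f_arr idA'] RC(1)]
      hexagon ..
qed

lemma stage_uniform:
  assumes N: "\<forall>x < n. \<zeta> x = i \<longrightarrow> (TN x \<in> S \<longleftrightarrow> b)" and M: "\<forall>y < m. \<xi> y = i \<longrightarrow> (TM y \<in> S \<longleftrightarrow> b)"
  shows "stage S = cmp C (Hm (subst_mor B As (if b then f else idm B A) (if b then idm B A' else f) i (\<xi> \<circ> \<theta>) \<gamma>))
     (cmp C (vcomp C n m \<zeta> \<xi> \<psi> \<phi> (As[i := stage_obj b]))
       (Fm (subst_mor B As (if b then idm B A' else f) (if b then f else idm B A) i (\<zeta> \<circ> \<sigma>) \<alpha>)))"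
proof -
  have argsN: "argsN S = reidx (As[i := stage_obj b]) \<zeta> n"
    using N less_bounds As i_less by (auto simp: argsN_def reidx_def objN_def nth_list_update)
  have argsM: "argsM S = reidx (As[i := stage_obj b]) \<xi> m"
    using M less_bounds As i_less by (auto simp: argsM_def reidx_def objM_def nth_list_update)
  have morsA: "map (morA S) [0..<length \<alpha>]
      = subst_mor B As (if b then idm B A' else f) (if b then f else idm B A) i (\<zeta> \<circ> \<sigma>) \<alpha>"
    using N less_bounds by (auto simp: morA_def subst_mor_def)
  have morsC: "map (morC S) [0..<length \<gamma>]
      = subst_mor B As (if b then f else idm B A) (if b then idm B A' else f) i (\<xi> \<circ> \<theta>) \<gamma>"
    using M less_bounds by (auto simp: morC_def subst_mor_def)
  text \<open>Inside the component every transition is in the same stage, so G's component is the identity.\<close>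
  have flat: "reidx (argsM S) \<eta> (length \<beta>) = reidx (argsN S) \<tau> (length \<beta>)"
    using N M less_bounds pushout_commutes by (auto simp: reidx_def argsN_nth argsM_nth objN_def objM_def)
  have morsB: "map (morB S) [0..<length \<beta>] = idm (power_cat B \<beta>) (reidx (argsN S) \<tau> (length \<beta>))"
    using N M less_bounds pushout_commutes by (auto simp: morB_def power_cat_idm reidx_def argsN_nth objN_def)
  have objs: "reidx (argsN S) \<tau> (length \<beta>) \<in> Obj (power_cat B \<beta>)"
    using set_argsN_reidx maps_into by (simp add: power_cat_def)
  have \<psi>: "\<psi> (argsM S) \<in> Arr C (Go (reidx (argsN S) \<tau> (length \<beta>))) (Ho (reidx (argsM S) \<theta> (length \<gamma>)))"
    using \<psi>_at_argsM[of S, unfolded flat] .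
  have \<phi>F: "cmp C (\<phi> (argsN S)) (Fm (map (morA S) [0..<length \<alpha>]))
      \<in> Arr C (Fo (subst_obj As A' A i (\<zeta> \<circ> \<sigma>) \<alpha>)) (Go (reidx (argsN S) \<tau> (length \<beta>)))"
    using cat_cmp_arr[OF C_cat functor_arr[OF F_functor morsA_arr] \<phi>_at_argsN] .
  have "stage S = cmp C (Hm (map (morC S) [0..<length \<gamma>]))
      (cmp C (\<psi> (argsM S)) (cmp C (\<phi> (argsN S)) (Fm (map (morA S) [0..<length \<alpha>]))))"
    unfolding stage_def morsB functor_idm[OF G_functor objs] cat_idm_left[OF C_cat \<phi>F] ..
  also have "\<dots> = cmp C (Hm (map (morC S) [0..<length \<gamma>]))
      (cmp C (cmp C (\<psi> (argsM S)) (\<phi> (argsN S))) (Fm (map (morA S) [0..<length \<alpha>])))"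
    using cat_cmp_assoc[OF C_cat functor_arr[OF F_functor morsA_arr] \<phi>_at_argsN \<psi>] by simp
  finally show ?thesis
    unfolding vcomp_def argsN argsM morsA morsC .
qed

lemma finite_transitions: "finite transitions"
  by (simp add: transitions_def)

lemma flow_transitions: "flow \<subseteq> transitions \<times> transitions"
  unfolding flow_def transitions_def using less_bounds pushout_commutes by force

lemma stage_sweep: "acyclic flow \<Longrightarrow> stage {} = stage transitions"
proof (rule acyclic_sweep[OF finite_transitions _ flow_transitions])
  fix S z assume S: "flow `` S \<subseteq> S" and z: "z \<in> transitions - S" and succ: "flow `` {z} \<subseteq> S"
  then consider x where "z = TN x" "x < n" "\<zeta> x = i" | y where "z = TM y" "y < m" "\<xi> y = i"
    unfolding transitions_def by blast
  then show "stage S = stage (insert z S)"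
  proof cases
    case 1
    then show ?thesis using stage_insert_TN z S succ by simp
  next
    case 2
    then show ?thesis using stage_insert_TM z S succ by simp
  qed
qed

lemma flow_acyclic:
  assumes "acyclic (comp_graph \<alpha> \<beta> \<gamma> \<sigma> \<tau> \<eta> \<theta> \<inter>
                  (component (comp_graph \<alpha> \<beta> \<gamma> \<sigma> \<tau> \<eta> \<theta>) n m \<zeta> \<xi> i \<times>
                   component (comp_graph \<alpha> \<beta> \<gamma> \<sigma> \<tau> \<eta> \<theta>) n m \<zeta> \<xi> i))"
  shows "acyclic flow"
proof -
  define E where "E = comp_graph \<alpha> \<beta> \<gamma> \<sigma> \<tau> \<eta> \<theta>"
  define K where "K = component E n m \<zeta> \<xi> i"
  have TN_K: "TN x \<in> K" if "x < n" "\<zeta> x = i" for x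
    unfolding K_def component_def using that by (intro CollectI exI[of _ "TN x"]) auto
  have TM_K: "TM y \<in> K" if "y < m" "\<xi> y = i" for y
    unfolding K_def component_def using that by (intro CollectI exI[of _ "TM y"]) auto
  have PB_K: "PB j \<in> K" if j: "j < length \<beta>" "\<zeta> (\<tau> j) = i" for j
  proof -
    have "(TN (\<tau> j), PB j) \<in> E \<union> E\<inverse>"
      unfolding E_def comp_graph_def using j(1) by (cases "\<beta> ! j") auto
    then have "(TN (\<tau> j), PB j) \<in> (E \<union> E\<inverse>)\<^sup>*" by blast
    then show ?thesis
      unfolding K_def component_def using j less_bounds(2) by blast
  qed
  have path: "(TN (\<tau> j), TM (\<eta> j)) \<in> (E \<inter> (K \<times> K))\<^sup>+"
    if "j < length \<beta>" "\<beta> ! j" "\<zeta> (\<tau> j) = i" for j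
  proof -
    have "(TN (\<tau> j), PB j) \<in> E" "(PB j, TM (\<eta> j)) \<in> E"
      unfolding E_def comp_graph_def using that by blast+
    moreover have "TN (\<tau> j) \<in> K" "PB j \<in> K" "TM (\<eta> j) \<in> K"
      using TN_K TM_K PB_K that less_bounds pushout_commutes[OF that(1)] by simp_all
    ultimately show ?thesis by (blast intro: trancl_into_trancl)
  qed
  have path': "(TM (\<eta> j), TN (\<tau> j)) \<in> (E \<inter> (K \<times> K))\<^sup>+"
    if "j < length \<beta>" "\<not> \<beta> ! j" "\<xi> (\<eta> j) = i" for j
  proof -
    have i: "\<zeta> (\<tau> j) = i" using pushout_commutes[OF that(1)] that(3) by simp
    have "(TM (\<eta> j), PB j) \<in> E" "(PB j, TN (\<tau> j)) \<in> E"
      unfolding E_def comp_graph_def using that by blast+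
    moreover have "TN (\<tau> j) \<in> K" "PB j \<in> K" "TM (\<eta> j) \<in> K"
      using TN_K TM_K PB_K that i less_bounds by simp_all
    ultimately show ?thesis by (blast intro: trancl_into_trancl)
  qed
  have "flow \<subseteq> (E \<inter> (K \<times> K))\<^sup>+"
    unfolding flow_def using path path' by blast
  from trancl_mono_subset[OF this] have "flow\<^sup>+ \<subseteq> (E \<inter> (K \<times> K))\<^sup>+"
    by simp
  then show ?thesis
    using assms unfolding E_def K_def acyclic_def by blast
qed

lemma dinaturality_hexagon:
  assumes "acyclic flow"
  shows "cmp C (Hm (subst_mor B As (idm B A) f i (\<xi> \<circ> \<theta>) \<gamma>))
           (cmp C (vcomp C n m \<zeta> \<xi> \<psi> \<phi> (As[i := A])) (Fm (subst_mor B As f (idm B A) i (\<zeta> \<circ> \<sigma>) \<alpha>)))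
       = cmp C (Hm (subst_mor B As f (idm B A') i (\<xi> \<circ> \<theta>) \<gamma>))
           (cmp C (vcomp C n m \<zeta> \<xi> \<psi> \<phi> (As[i := A'])) (Fm (subst_mor B As (idm B A') f i (\<zeta> \<circ> \<sigma>) \<alpha>)))"
  using stage_uniform[of "{}" False] stage_uniform[of transitions True] stage_sweep[OF assms]
  by (simp add: transitions_def)

end

theorem mainTheorem3:
  fixes B :: "('o, 'm) cat" and C :: "('p, 'q) cat"
    and \<alpha> \<beta> \<gamma> :: "bool list" and n m l i :: nat
    and \<sigma> \<tau> \<eta> \<theta> \<zeta> \<xi> :: "nat \<Rightarrow> nat"
    and Fo Go Ho :: "'o list \<Rightarrow> 'p" and Fm Gm Hm :: "'m list \<Rightarrow> 'q"
    and \<phi> \<psi> :: "'o list \<Rightarrow> 'q"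
  assumes "is_category B" and "is_category C"
    and "is_functor (power_cat B \<alpha>) C Fo Fm"
    and "is_functor (power_cat B \<beta>) C Go Gm"
    and "is_functor (power_cat B \<gamma>) C Ho Hm"
    and "is_transformation B C \<alpha> \<beta> n \<sigma> \<tau> Fo Go \<phi>"
    and "is_transformation B C \<beta> \<gamma> m \<eta> \<theta> Go Ho \<psi>"
    and "is_pushout (length \<beta>) n m \<tau> \<eta> l \<zeta> \<xi>"
    and "i < l"
    and "\<forall>x < n. \<zeta> x = i \<longrightarrow> dinatural_in B C \<alpha> \<beta> n \<sigma> \<tau> Fm Gm \<phi> x"
    and "\<forall>y < m. \<xi> y = i \<longrightarrow> dinatural_in B C \<beta> \<gamma> m \<eta> \<theta> Gm Hm \<psi> y"
    and "acyclic (comp_graph \<alpha> \<beta> \<gamma> \<sigma> \<tau> \<eta> \<theta> \<inter>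
                  (component (comp_graph \<alpha> \<beta> \<gamma> \<sigma> \<tau> \<eta> \<theta>) n m \<zeta> \<xi> i \<times>
                   component (comp_graph \<alpha> \<beta> \<gamma> \<sigma> \<tau> \<eta> \<theta>) n m \<zeta> \<xi> i))"
  shows "dinatural_in B C \<alpha> \<gamma> l (\<zeta> \<circ> \<sigma>) (\<xi> \<circ> \<theta>) Fm Hm (vcomp C n m \<zeta> \<xi> \<psi> \<phi>) i"
  unfolding dinatural_in_def
proof (intro allI impI)
  fix As A A' f
  assume "length As = l \<and> set As \<subseteq> Obj B \<and> f \<in> Arr B A A'"
  then interpret vcomp_dinaturality_instance B C \<alpha> \<beta> \<gamma> n m l i \<sigma> \<tau> \<eta> \<theta> \<zeta> \<xi> Fo Go Ho Fm Gm Hm \<phi> \<psi> As A A' f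
    using assms by unfold_locales auto
  show "cmp C (Hm (subst_mor B As (idm B A) f i (\<xi> \<circ> \<theta>) \<gamma>))
           (cmp C (vcomp C n m \<zeta> \<xi> \<psi> \<phi> (As[i := A])) (Fm (subst_mor B As f (idm B A) i (\<zeta> \<circ> \<sigma>) \<alpha>)))
       = cmp C (Hm (subst_mor B As f (idm B A') i (\<xi> \<circ> \<theta>) \<gamma>))
           (cmp C (vcomp C n m \<zeta> \<xi> \<psi> \<phi> (As[i := A'])) (Fm (subst_mor B As (idm B A') f i (\<zeta> \<circ> \<sigma>) \<alpha>)))"
    using dinaturality_hexagon[OF flow_acyclic[OF assms(12)]] .
qed

end
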